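(* Let $p\in(1,+\infty)$. There exists $\bar C_{n,p}\in(0,+\infty)$ such that for every $v\in L^p(\mathbb R^n)$, every bounded open $\Omega'\subset\mathbb R^n$, every $s\in(0,1)$ and every $h\in\mathbb R^n$, $$\|\tau_hv-v\|^p_{L^p(\Omega')}\le\bar C_{n,p}\,|h|^{sp}(1-s)\int_{B_{|h|}}\frac{\|\tau_yv-v\|^p_{L^p(\Omega'_{|h|})}}{|y|^{n+sp}}\,dy.$$
   Context: $\tau_hf(\cdot):=f(\cdot+h)$; $B_r$ is the open ball of radius $r$ centered at $0$; for $t>0$, $\Omega'_t:=\{x\in\mathbb R^n: \operatorname{dist}(x,\Omega')\le t\}$. *)

theory Defs
  imports "HOL-Analysis.Analysis"
begin

definition nbhd :: "'a::euclidean_space set \<Rightarrow> real \<Rightarrow> 'a set" where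
  "nbhd S t = {x. infdist x S \<le> t}"

definition Lp_pow :: "real \<Rightarrow> 'a::euclidean_space set \<Rightarrow> ('a \<Rightarrow> real) \<Rightarrow> ennreal" where
  "Lp_pow p S f = (\<integral>\<^sup>+ x \<in> S. ennreal (\<bar>f x\<bar> powr p) \<partial>lebesgue)"

end

theory Submission
  imports Defs
begin

text \<open>
  Fix a dyadic scale N = 2^k and put d = h/N. Telescoping v(x+h) - v(x) along x, x+d, ..., x+h
  and convexity of t^p bound ||\<tau>_h v - v||^p by N^(p-1) times a sum of N translates of
  ||\<tau>_d v - v||^p. Each of these is averaged over y in the ball E_k of radius |d|/8 around d/2,
  writing v(x+d) - v(x) = (v(x+d) - v(x+y)) + (v(x+y) - v(x)): as E_k is invariant under
  y \<mapsto> d - y, both terms average to ||\<tau>_y v - v||^p, and on E_k we have |y| \<approx> |d| and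
  |E_k| \<approx> |d|^n. This gives
    2^(-kp(1-s)) ||\<tau>_h v - v||^p \<le> C |h|^(sp) \<integral>_{E_k} ||\<tau>_y v - v||^p / |y|^(n+sp) dy.
  The balls E_k are pairwise disjoint subsets of B_|h|, so summing over k produces the factor
  1 - 2^(-p(1-s)) \<le> p(1-s).
\<close>

lemma convex_on_powr_nonneg:
  assumes "1 \<le> p"
  shows "convex_on {0::real..} (\<lambda>x. x powr p)"
proof (rule convex_onI)
  fix t x y :: real
  assume t: "0 < t" "t < 1" and x: "x \<in> {0..}" and y: "y \<in> {0..}"
  show "((1 - t) *\<^sub>R x + t *\<^sub>R y) powr p \<le> (1 - t) * x powr p + t * y powr p"
  proof (cases "x = 0 \<or> y = 0")
    case False
    with x y convex_onD[OF powr_convex[OF assms], of t x y] t show ?thesis by simp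
  next
    case True
    have "t powr p \<le> t" "(1 - t) powr p \<le> 1 - t"
      using t assms by (auto intro: powr_le_one_le)
    with True x y show ?thesis
      by (auto simp: powr_mult intro!: mult_right_mono)
  qed
qed simp

lemma abs_sum_powr_le:
  fixes b :: "'i \<Rightarrow> real"
  assumes "finite I" "I \<noteq> {}" "1 \<le> p"
  shows "\<bar>\<Sum>i\<in>I. b i\<bar> powr p \<le> real (card I) powr (p - 1) * (\<Sum>i\<in>I. \<bar>b i\<bar> powr p)"
proof -
  define N where "N = real (card I)"
  have N: "0 < N" using assms by (simp add: N_def card_gt_0_iff)
  have mean: "(\<Sum>i\<in>I. \<bar>b i\<bar>) = N * (\<Sum>i\<in>I. (1 / N) *\<^sub>R \<bar>b i\<bar>)"
    using N by (simp add: sum_distrib_left)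
  have "\<bar>\<Sum>i\<in>I. b i\<bar> powr p \<le> (\<Sum>i\<in>I. \<bar>b i\<bar>) powr p"
    using assms by (intro powr_mono2) auto
  also have "\<dots> = N powr p * (\<Sum>i\<in>I. (1 / N) *\<^sub>R \<bar>b i\<bar>) powr p"
    using N by (simp add: mean powr_mult sum_nonneg)
  also have "\<dots> \<le> N powr p * (\<Sum>i\<in>I. (1 / N) * \<bar>b i\<bar> powr p)"
    using N assms
    by (intro mult_left_mono convex_on_sum[OF _ _ convex_on_powr_nonneg]) (auto simp: N_def)
  also have "\<dots> = N powr (p - 1) * (\<Sum>i\<in>I. \<bar>b i\<bar> powr p)"
    using N by (simp add: powr_diff sum_divide_distrib[symmetric])
  finally show ?thesis by (simp add: N_def)
qed

lemma one_minus_two_powr_neg_le: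
  assumes "0 \<le> (x::real)"
  shows "1 - 2 powr (- x) \<le> x"
proof -
  have "1 + (- x * ln 2) \<le> 2 powr (- x)"
    using exp_ge_add_one_self[of "- x * ln 2"] by (simp add: powr_def)
  moreover have "x * ln 2 \<le> x"
    using assms ln_2_less_1 by (simp add: mult_left_le)
  ultimately show ?thesis by linarith
qed

lemma ennreal_le_of_geometric_bound:
  fixes L M :: ennreal and a :: "nat \<Rightarrow> ennreal" and q :: real
  assumes "0 \<le> q" "q < 1" "\<And>k. L * ennreal (q ^ k) \<le> M * a k"
  shows "L \<le> ennreal (1 - q) * M * (\<Sum>k. a k)"
proof -
  have "(\<Sum>k. ennreal (q ^ k)) = ennreal (1 / (1 - q))"
    using assms by (simp add: suminf_ennreal2 summable_geometric suminf_geometric)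
  then have "L * ennreal (1 / (1 - q)) = (\<Sum>k. L * ennreal (q ^ k))"
    by simp
  also have "\<dots> \<le> (\<Sum>k. M * a k)"
    by (intro suminf_le assms(3)) auto
  finally have "L * ennreal (1 / (1 - q)) \<le> M * (\<Sum>k. a k)"
    by simp
  then have "L * ennreal (1 / (1 - q)) * ennreal (1 - q) \<le> M * (\<Sum>k. a k) * ennreal (1 - q)"
    by (rule mult_right_mono) simp
  moreover have "L * ennreal (1 / (1 - q)) * ennreal (1 - q) = L"
    using assms by (simp add: mult.assoc ennreal_mult[symmetric])
  ultimately show ?thesis
    by (simp add: mult_ac)
qed

lemma ennreal_mult_le_imp_le_scaled:
  fixes L I :: ennreal
  assumes "ennreal a * L \<le> ennreal b * I" "0 < a" "0 \<le> b" "0 \<le> c"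
  shows "L * ennreal c \<le> ennreal (b * c / a) * I"
proof -
  have "L * ennreal c = (ennreal a * L) * ennreal (c / a)"
    using assms by (simp add: ennreal_mult[symmetric] mult_ac)
  also have "\<dots> \<le> (ennreal b * I) * ennreal (c / a)"
    using assms(1) by (rule mult_right_mono) simp
  also have "\<dots> = ennreal (b * c / a) * I"
    using assms by (simp add: ennreal_mult[symmetric] mult_ac)
  finally show ?thesis .
qed

lemma Lp_pow_lborel:
  "Lp_pow p S f = (\<integral>\<^sup>+x\<in>S. ennreal (\<bar>f x\<bar> powr p) \<partial>lborel)"
  by (simp add: Lp_pow_def nn_integral_completion)

lemma nn_integral_lborel_translate:
  fixes g :: "'a::euclidean_space \<Rightarrow> ennreal"
  assumes "g \<in> borel_measurable borel"
  shows "(\<integral>\<^sup>+x. g (x + c) \<partial>lborel) = (\<integral>\<^sup>+x. g x \<partial>lborel)"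
proof -
  have "(\<integral>\<^sup>+x. g x \<partial>lborel) = (\<integral>\<^sup>+x. g x \<partial>distr lborel borel ((+) c))"
    by (simp add: lborel_distr_plus)
  also have "\<dots> = (\<integral>\<^sup>+x. g (c + x) \<partial>lborel)"
    using assms by (simp add: nn_integral_distr)
  finally show ?thesis
    by (simp add: add.commute)
qed

lemma nn_integral_lborel_reflect:
  fixes g :: "'a::euclidean_space \<Rightarrow> ennreal"
  assumes "g \<in> borel_measurable borel"
  shows "(\<integral>\<^sup>+x. g (c - x) \<partial>lborel) = (\<integral>\<^sup>+x. g x \<partial>lborel)"
proof -
  have "(\<integral>\<^sup>+x. g x \<partial>lborel) = (\<integral>\<^sup>+x. g x \<partial>distr lborel borel (\<lambda>x. c + (-1) *\<^sub>R x))"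
    using lborel_affine[of "-1" c] by (simp add: density_1)
  also have "\<dots> = (\<integral>\<^sup>+x. g (c - x) \<partial>lborel)"
    using assms by (simp add: nn_integral_distr)
  finally show ?thesis ..
qed

lemma AE_lborel_translate:
  fixes c :: "'a::euclidean_space"
  assumes "AE x in lborel. P x"
  shows "AE x in lborel. P (x + c)"
proof -
  obtain N where N: "{x. \<not> P x} \<subseteq> N" "N \<in> null_sets lborel"
    using assms by (auto elim!: AE_E simp: null_sets_def)
  have [measurable]: "N \<in> sets borel"
    using N(2) by (simp add: null_sets_def)
  have "AE x in distr lborel borel ((+) c). x \<notin> N"
    unfolding lborel_distr_plus using N(2) by (rule AE_not_in)
  then have "AE x in lborel. c + x \<notin> N"
    by (simp add: AE_distr_iff)
  then show ?thesis
    by eventually_elim (use N(1) in \<open>auto simp: add.commute\<close>)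
qed

lemma set_nn_integral_disjoint_family_le:
  assumes "disjoint_family E" "\<And>k. E k \<in> sets M" "f \<in> borel_measurable M" "(\<Union>k. E k) \<subseteq> B"
  shows "(\<Sum>k. \<integral>\<^sup>+x\<in>E k. f x \<partial>M) \<le> (\<integral>\<^sup>+x\<in>B. f x \<partial>M)"
proof -
  have "(\<Sum>k. \<integral>\<^sup>+x\<in>E k. f x \<partial>M) = (\<integral>\<^sup>+x. (\<Sum>k. f x * indicator (E k) x) \<partial>M)"
    using assms by (intro nn_integral_suminf[symmetric]) auto
  also have "\<dots> = (\<integral>\<^sup>+x\<in>(\<Union>k. E k). f x \<partial>M)"
    using assms(1) by (simp add: suminf_indicator)
  also have "\<dots> \<le> (\<integral>\<^sup>+x\<in>B. f x \<partial>M)"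
    using assms(4) by (intro nn_integral_mono) (auto simp: indicator_def)
  finally show ?thesis .
qed

lemma emeasure_lborel_ball:
  fixes c :: "'a::euclidean_space"
  assumes "0 \<le> r"
  shows "emeasure lborel (ball c r) = ennreal (r ^ DIM('a) * measure lborel (ball (0::'a) 1))"
proof -
  have "emeasure lborel (ball c r) = ennreal (r ^ DIM('a)) * emeasure lebesgue (ball (0::'a) 1)"
    using emeasure_lebesgue_ball_conv_unit_ball[OF assms, of c] by simp
  also have "emeasure lebesgue (ball (0::'a) 1) = ennreal (measure lborel (ball (0::'a) 1))"
    using emeasure_lborel_ball_finite[of "0::'a" 1] by (simp add: emeasure_eq_ennreal_measure)
  finally show ?thesis
    using assms by (simp add: ennreal_mult)
qed

lemma Lp_pow_translate_le:
  fixes f :: "'a::euclidean_space \<Rightarrow> real"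
  assumes [measurable]: "f \<in> borel_measurable borel" "T \<in> sets borel"
    and "\<And>x. x \<in> S \<Longrightarrow> x + c \<in> T"
  shows "Lp_pow p S (\<lambda>x. f (x + c)) \<le> Lp_pow p T f"
proof -
  have "Lp_pow p S (\<lambda>x. f (x + c)) \<le> (\<integral>\<^sup>+x. ennreal (\<bar>f (x + c)\<bar> powr p) * indicator T (x + c) \<partial>lborel)"
    unfolding Lp_pow_lborel using assms(3) by (intro nn_integral_mono) (auto simp: indicator_def)
  also have "\<dots> = Lp_pow p T f"
    unfolding Lp_pow_lborel
    by (rule nn_integral_lborel_translate[where g = "\<lambda>x. ennreal (\<bar>f x\<bar> powr p) * indicator T x"]) simp
  finally show ?thesis .
qed

lemma Lp_pow_sum_le:
  fixes f :: "'i \<Rightarrow> 'a::euclidean_space \<Rightarrow> real"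
  assumes [measurable]: "\<And>i. f i \<in> borel_measurable borel" "S \<in> sets borel"
    and "finite I" "I \<noteq> {}" "1 \<le> p"
  shows "Lp_pow p S (\<lambda>x. \<Sum>i\<in>I. f i x) \<le> real (card I) powr (p - 1) * (\<Sum>i\<in>I. Lp_pow p S (f i))"
proof -
  have "Lp_pow p S (\<lambda>x. \<Sum>i\<in>I. f i x)
      \<le> (\<integral>\<^sup>+x. ennreal (real (card I) powr (p - 1)) * (\<Sum>i\<in>I. ennreal (\<bar>f i x\<bar> powr p) * indicator S x) \<partial>lborel)"
    unfolding Lp_pow_lborel
  proof (intro nn_integral_mono)
    fix x
    have "ennreal (\<bar>\<Sum>i\<in>I. f i x\<bar> powr p) \<le> ennreal (real (card I) powr (p - 1) * (\<Sum>i\<in>I. \<bar>f i x\<bar> powr p))"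
      using assms by (intro ennreal_leI abs_sum_powr_le)
    then show "ennreal (\<bar>\<Sum>i\<in>I. f i x\<bar> powr p) * indicator S x
        \<le> ennreal (real (card I) powr (p - 1)) * (\<Sum>i\<in>I. ennreal (\<bar>f i x\<bar> powr p) * indicator S x)"
      by (simp add: indicator_def ennreal_mult sum_nonneg flip: sum_ennreal)
  qed
  also have "\<dots> = real (card I) powr (p - 1) * (\<Sum>i\<in>I. Lp_pow p S (f i))"
    unfolding Lp_pow_lborel by (subst nn_integral_cmult, measurable, subst nn_integral_sum) auto
  finally show ?thesis .
qed

lemma Lp_pow_add_le:
  fixes f g :: "'a::euclidean_space \<Rightarrow> real"
  assumes "f \<in> borel_measurable borel" "g \<in> borel_measurable borel" "S \<in> sets borel" "1 \<le> p"
  shows "Lp_pow p S (\<lambda>x. f x + g x) \<le> 2 powr (p - 1) * (Lp_pow p S f + Lp_pow p S g)"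
  using Lp_pow_sum_le[where I = "{False, True}" and f = "\<lambda>i. if i then g else f"] assms by simp

lemma measurable_Lp_pow_shift_diff:
  fixes u :: "'a::euclidean_space \<Rightarrow> real"
  assumes [measurable]: "u \<in> borel_measurable borel" "T \<in> sets borel"
  shows "(\<lambda>y. Lp_pow p T (\<lambda>x. u (x + y) - u x)) \<in> borel_measurable borel"
proof -
  have "(\<lambda>(y, x). ennreal (\<bar>u (x + y) - u x\<bar> powr p) * indicator T x) \<in> borel_measurable (lborel \<Otimes>\<^sub>M lborel)"
    by measurable
  then show ?thesis
    unfolding Lp_pow_lborel using lborel.borel_measurable_nn_integral by fastforce
qed

lemma Lp_pow_shift_diff_cong_AE:
  fixes u v :: "'a::euclidean_space \<Rightarrow> real"
  assumes "AE x in lborel. v x = u x"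
  shows "Lp_pow p S (\<lambda>x. v (x + y) - v x) = Lp_pow p S (\<lambda>x. u (x + y) - u x)"
proof -
  have "AE x in lborel. v (x + y) - v x = u (x + y) - u x"
    using AE_lborel_translate[OF assms, of y] assms by eventually_elim simp
  then show ?thesis
    unfolding Lp_pow_lborel by (intro nn_integral_cong_AE) auto
qed

lemma closed_nbhd: "closed (nbhd S t)"
  unfolding nbhd_def by (intro closed_Collect_le continuous_intros)

lemma add_mem_nbhd: "x \<in> S \<Longrightarrow> norm v \<le> t \<Longrightarrow> x + v \<in> nbhd S t"
  unfolding nbhd_def using infdist_le[of x S "x + v"] by (simp add: dist_norm)

lemma norm_bounds_of_mem_ball_midpoint:
  fixes d y :: "'a::real_normed_vector"
  assumes "y \<in> ball ((1/2) *\<^sub>R d) (norm d / 8)"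
  shows "3 / 8 * norm d < norm y" "norm y < 5 / 8 * norm d"
proof -
  have "norm (y - (1/2) *\<^sub>R d) < norm d / 8"
    using assms by (simp add: dist_norm norm_minus_commute)
  then show "3 / 8 * norm d < norm y" "norm y < 5 / 8 * norm d"
    using norm_triangle_ineq2[of y "(1/2) *\<^sub>R d"] norm_triangle_ineq2[of "(1/2) *\<^sub>R d" y]
    by (simp_all add: norm_minus_commute)
qed

lemma ball_midpoint_reflect:
  fixes d y :: "'a::real_normed_vector"
  assumes "y \<in> ball ((1/2) *\<^sub>R d) r"
  shows "d - y \<in> ball ((1/2) *\<^sub>R d) r"
proof -
  have half: "(1/2) *\<^sub>R d + (1/2) *\<^sub>R d = d"
    by (simp flip: scaleR_add_left)
  have "dist ((1/2) *\<^sub>R d) (d - y) = norm (y - (d - (1/2) *\<^sub>R d))"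
    by (simp add: dist_norm algebra_simps)
  also have "d - (1/2) *\<^sub>R d = (1/2) *\<^sub>R d"
    by (subst (1) half[symmetric]) (rule add_diff_cancel_right')
  finally show ?thesis
    using assms by (simp add: dist_norm norm_minus_commute)
qed

lemma norm_scaleR_add_le:
  fixes d y :: "'a::real_normed_vector"
  assumes "j < N" "norm y \<le> norm d"
  shows "norm (real j *\<^sub>R d + y) \<le> norm (real N *\<^sub>R d)"
proof -
  have "norm (real j *\<^sub>R d + y) \<le> real j * norm d + norm d"
    using norm_triangle_ineq[of "real j *\<^sub>R d" y] assms(2) by simp
  also have "\<dots> \<le> real N * norm d"
    using assms(1) mult_right_mono[of "real j + 1" "real N" "norm d"] by (simp add: distrib_right)
  finally show ?thesis
    by simp
qed

lemma disjoint_family_dyadic_balls: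
  fixes h :: "'a::real_normed_vector"
  shows "disjoint_family (\<lambda>k::nat. ball ((1/2) *\<^sub>R (h /\<^sub>R 2 ^ k)) (norm (h /\<^sub>R 2 ^ k) / 8))"
proof -
  have "y \<notin> ball ((1/2) *\<^sub>R (h /\<^sub>R 2 ^ m)) (norm (h /\<^sub>R 2 ^ m) / 8)"
    if "y \<in> ball ((1/2) *\<^sub>R (h /\<^sub>R 2 ^ k)) (norm (h /\<^sub>R 2 ^ k) / 8)" "k < m" for y k m
  proof
    assume y_in: "y \<in> ball ((1/2) *\<^sub>R (h /\<^sub>R 2 ^ m)) (norm (h /\<^sub>R 2 ^ m) / 8)"
    have "0 < norm (h /\<^sub>R 2 ^ k) / 8"
      using that(1) by (metis mem_ball zero_le_dist order_le_less_trans)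
    then have "h \<noteq> 0"
      by auto
    from norm_bounds_of_mem_ball_midpoint(2)[OF y_in]
    have "norm y < 5 / 8 * (norm h / 2 ^ m)"
      by (simp add: field_simps)
    also have "\<dots> \<le> 5 / 8 * (norm h / 2 ^ Suc k)"
      using \<open>k < m\<close> by (intro mult_left_mono divide_left_mono power_increasing) auto
    also have "\<dots> < 3 / 8 * (norm h / 2 ^ k)"
      using \<open>h \<noteq> 0\<close> by (simp add: field_simps)
    finally show False
      using norm_bounds_of_mem_ball_midpoint(1)[OF that(1)] by (simp add: field_simps)
  qed
  then show ?thesis
    unfolding disjoint_family_on_def by (metis disjoint_iff linorder_neq_iff)
qed

lemma dyadic_ball_subset:
  fixes h :: "'a::real_normed_vector"
  shows "ball ((1/2) *\<^sub>R (h /\<^sub>R 2 ^ k)) (norm (h /\<^sub>R 2 ^ k) / 8) \<subseteq> ball 0 (norm h)"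
proof
  fix y
  assume "y \<in> ball ((1/2) *\<^sub>R (h /\<^sub>R 2 ^ k)) (norm (h /\<^sub>R 2 ^ k) / 8)"
  from norm_bounds_of_mem_ball_midpoint(2)[OF this]
  have "norm y < 5 / 8 * (norm h / 2 ^ k)"
    by (simp add: field_simps)
  also have "\<dots> \<le> norm h"
  proof -
    have "(5::real) \<le> 8 * 2 ^ k"
      using one_le_power[of "2::real" k] by linarith
    from mult_left_mono[OF this norm_ge_zero[of h]] show ?thesis
      by (simp add: field_simps)
  qed
  finally show "y \<in> ball 0 (norm h)"
    by simp
qed

lemma Lp_pow_shift_diff_split:
  fixes u :: "'a::euclidean_space \<Rightarrow> real"
  assumes [measurable]: "u \<in> borel_measurable borel" "S \<in> sets borel" "T \<in> sets borel"
    and "1 \<le> p"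
    and "\<And>x. x \<in> S \<Longrightarrow> x + a \<in> T" "\<And>x. x \<in> S \<Longrightarrow> x + a + y \<in> T"
  shows "Lp_pow p S (\<lambda>x. u (x + a + d) - u (x + a))
    \<le> 2 powr (p - 1) * (Lp_pow p T (\<lambda>x. u (x + (d - y)) - u x) + Lp_pow p T (\<lambda>x. u (x + y) - u x))"
proof -
  have "Lp_pow p S (\<lambda>x. u (x + a + d) - u (x + a))
      = Lp_pow p S (\<lambda>x. (u (x + (a + y) + (d - y)) - u (x + (a + y))) + (u (x + a + y) - u (x + a)))"
    by (simp add: algebra_simps)
  also have "\<dots> \<le> 2 powr (p - 1) * (Lp_pow p S (\<lambda>x. u (x + (a + y) + (d - y)) - u (x + (a + y)))
      + Lp_pow p S (\<lambda>x. u (x + a + y) - u (x + a)))"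
    using assms(4) by (intro Lp_pow_add_le) auto
  also have "\<dots> \<le> 2 powr (p - 1) * (Lp_pow p T (\<lambda>x. u (x + (d - y)) - u x) + Lp_pow p T (\<lambda>x. u (x + y) - u x))"
    using assms(5,6)
    by (intro mult_left_mono add_mono Lp_pow_translate_le[where f = "\<lambda>x. u (x + (d - y)) - u x"]
        Lp_pow_translate_le[where f = "\<lambda>x. u (x + y) - u x"]) (auto simp: add.assoc)
  finally show ?thesis .
qed

lemma Lp_pow_shift_diff_le_average:
  fixes u :: "'a::euclidean_space \<Rightarrow> real"
  assumes [measurable]: "u \<in> borel_measurable borel" "S \<in> sets borel" "T \<in> sets borel" "E \<in> sets borel"
    and "1 \<le> p"
    and "\<And>y. y \<in> E \<Longrightarrow> d - y \<in> E"
    and "\<And>x. x \<in> S \<Longrightarrow> x + a \<in> T" "\<And>x y. x \<in> S \<Longrightarrow> y \<in> E \<Longrightarrow> x + a + y \<in> T"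
  shows "emeasure lborel E * Lp_pow p S (\<lambda>x. u (x + a + d) - u (x + a))
    \<le> 2 powr p * (\<integral>\<^sup>+y\<in>E. Lp_pow p T (\<lambda>x. u (x + y) - u x) \<partial>lborel)"
proof -
  define D where "D y = Lp_pow p T (\<lambda>x. u (x + y) - u x)" for y
  define L where "L = Lp_pow p S (\<lambda>x. u (x + a + d) - u (x + a))"
  have [measurable]: "D \<in> borel_measurable borel"
    unfolding D_def by (rule measurable_Lp_pow_shift_diff) simp_all
  have "indicator E (d - y) = (indicator E y :: ennreal)" for y
    using assms(6)[of y] assms(6)[of "d - y"] by (auto simp: indicator_def)
  then have reflect: "(\<integral>\<^sup>+y\<in>E. D (d - y) \<partial>lborel) = (\<integral>\<^sup>+y\<in>E. D y \<partial>lborel)"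
    using nn_integral_lborel_reflect[where g = "\<lambda>y. D y * indicator E y" and c = d] by simp
  have "emeasure lborel E * L = (\<integral>\<^sup>+y\<in>E. L \<partial>lborel)"
    by (simp add: nn_integral_cmult_indicator mult.commute)
  also have "\<dots> \<le> (\<integral>\<^sup>+y\<in>E. 2 powr (p - 1) * (D (d - y) + D y) \<partial>lborel)"
  proof (intro nn_integral_mono)
    fix y
    have "L \<le> 2 powr (p - 1) * (D (d - y) + D y)" if "y \<in> E"
      unfolding L_def D_def using assms that by (intro Lp_pow_shift_diff_split) auto
    then show "L * indicator E y \<le> 2 powr (p - 1) * (D (d - y) + D y) * indicator E y"
      by (simp add: indicator_def)
  qed
  also have "\<dots> = 2 powr (p - 1) * ((\<integral>\<^sup>+y\<in>E. D (d - y) \<partial>lborel) + (\<integral>\<^sup>+y\<in>E. D y \<partial>lborel))"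
    by (simp add: nn_integral_cmult nn_integral_add distrib_right mult.assoc)
  also have "\<dots> = 2 powr p * (\<integral>\<^sup>+y\<in>E. D y \<partial>lborel)"
  proof -
    have "2 powr p = 2 powr (p - 1) * (2::real)"
      by (simp add: powr_diff)
    then have "ennreal (2 powr (p - 1)) * 2 = ennreal (2 powr p)"
      by (simp add: ennreal_mult)
    then show ?thesis
      unfolding reflect by (simp only: mult_2[symmetric] mult.assoc[symmetric])
  qed
  finally show ?thesis
    unfolding L_def D_def .
qed

lemma Lp_pow_shift_diff_le_telescope:
  fixes u :: "'a::euclidean_space \<Rightarrow> real"
  assumes [measurable]: "u \<in> borel_measurable borel" "S \<in> sets borel"
    and "1 \<le> p" "0 < N" "h = real N *\<^sub>R d"
  shows "Lp_pow p S (\<lambda>x. u (x + h) - u x)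
    \<le> real N powr (p - 1) * (\<Sum>j<N. Lp_pow p S (\<lambda>x. u (x + real j *\<^sub>R d + d) - u (x + real j *\<^sub>R d)))"
proof -
  have "u (x + h) - u x = (\<Sum>j<N. u (x + real j *\<^sub>R d + d) - u (x + real j *\<^sub>R d))" for x
    using sum_lessThan_telescope[where f = "\<lambda>j. u (x + real j *\<^sub>R d)" and m = N] assms(5)
    by (simp add: algebra_simps)
  moreover have "Lp_pow p S (\<lambda>x. \<Sum>j<N. u (x + real j *\<^sub>R d + d) - u (x + real j *\<^sub>R d))
      \<le> real (card {..<N}) powr (p - 1) * (\<Sum>j<N. Lp_pow p S (\<lambda>x. u (x + real j *\<^sub>R d + d) - u (x + real j *\<^sub>R d)))"
    using assms by (intro Lp_pow_sum_le) auto
  ultimately show ?thesis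
    by simp
qed

lemma Lp_pow_shift_diff_le_ball_average:
  fixes u :: "'a::euclidean_space \<Rightarrow> real"
  assumes [measurable]: "u \<in> borel_measurable borel" "S \<in> sets borel"
    and "1 \<le> p" "0 < N" "h = real N *\<^sub>R d"
  shows "emeasure lborel (ball ((1/2) *\<^sub>R d) (norm d / 8)) * Lp_pow p S (\<lambda>x. u (x + h) - u x)
    \<le> (2 * real N) powr p *
      (\<integral>\<^sup>+y\<in>ball ((1/2) *\<^sub>R d) (norm d / 8). Lp_pow p (nbhd S (norm h)) (\<lambda>x. u (x + y) - u x) \<partial>lborel)"
proof -
  define E where "E = ball ((1/2) *\<^sub>R d) (norm d / 8)"
  define T where "T = nbhd S (norm h)"
  define I where "I = (\<integral>\<^sup>+y\<in>E. Lp_pow p T (\<lambda>x. u (x + y) - u x) \<partial>lborel)"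
  define D where "D j = Lp_pow p S (\<lambda>x. u (x + real j *\<^sub>R d + d) - u (x + real j *\<^sub>R d))" for j :: nat
  have [measurable]: "T \<in> sets borel" "E \<in> sets borel"
    unfolding T_def E_def by (simp_all add: closed_nbhd borel_closed)
  have step: "emeasure lborel E * D j \<le> 2 powr p * I" if "j < N" for j
    unfolding D_def I_def
  proof (rule Lp_pow_shift_diff_le_average)
    show "d - y \<in> E" if "y \<in> E" for y
      using that unfolding E_def by (rule ball_midpoint_reflect)
    show "x + real j *\<^sub>R d \<in> T" if "x \<in> S" for x
      using norm_scaleR_add_le[OF \<open>j < N\<close>, of 0 d] assms(5)
      unfolding T_def by (intro add_mem_nbhd[OF that]) auto
    show "x + real j *\<^sub>R d + y \<in> T" if "x \<in> S" "y \<in> E" for x y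
    proof -
      have "norm y \<le> norm d"
        using norm_bounds_of_mem_ball_midpoint(2)[of y d] \<open>y \<in> E\<close> norm_ge_zero[of d]
        unfolding E_def by linarith
      then show ?thesis
        using norm_scaleR_add_le[OF \<open>j < N\<close>, of y d] assms(5)
        unfolding T_def add.assoc by (intro add_mem_nbhd[OF \<open>x \<in> S\<close>]) auto
    qed
  qed (use assms in simp_all)
  have "emeasure lborel E * Lp_pow p S (\<lambda>x. u (x + h) - u x)
      \<le> emeasure lborel E * (real N powr (p - 1) * (\<Sum>j<N. D j))"
    unfolding D_def using assms by (intro mult_left_mono Lp_pow_shift_diff_le_telescope) auto
  also have "\<dots> = real N powr (p - 1) * (\<Sum>j<N. emeasure lborel E * D j)"
    by (simp add: sum_distrib_left mult.left_commute)
  also have "\<dots> \<le> real N powr (p - 1) * (\<Sum>j<N. 2 powr p * I)"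
    by (intro mult_left_mono sum_mono step) auto
  also have "\<dots> = ennreal (real N powr (p - 1) * real N * 2 powr p) * I"
    by (simp add: ennreal_mult mult.assoc ennreal_of_nat_eq_real_of_nat)
  also have "real N powr (p - 1) * real N * 2 powr p = (2 * real N) powr p"
    using assms(4) by (simp add: powr_diff powr_mult)
  finally show ?thesis
    unfolding E_def I_def T_def .
qed

lemma set_nn_integral_le_powr_weighted:
  fixes D :: "'a::euclidean_space \<Rightarrow> ennreal"
  assumes [measurable]: "D \<in> borel_measurable borel" "E \<in> sets borel"
    and "0 \<le> e" "\<And>y. y \<in> E \<Longrightarrow> 0 < norm y \<and> norm y \<le> r"
  shows "(\<integral>\<^sup>+y\<in>E. D y \<partial>lborel) \<le> r powr e * (\<integral>\<^sup>+y\<in>E. D y * ennreal (1 / norm y powr e) \<partial>lborel)"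
proof -
  have "(\<integral>\<^sup>+y\<in>E. D y \<partial>lborel) \<le> (\<integral>\<^sup>+y. r powr e * (D y * ennreal (1 / norm y powr e) * indicator E y) \<partial>lborel)"
  proof (intro nn_integral_mono)
    fix y
    show "D y * indicator E y \<le> r powr e * (D y * ennreal (1 / norm y powr e) * indicator E y)"
    proof (cases "y \<in> E")
      case True
      then have "1 \<le> r powr e * (1 / norm y powr e)"
        using assms(3,4) by (simp add: powr_mono2)
      then have "1 \<le> ennreal (r powr e) * ennreal (1 / norm y powr e)"
        by (simp add: ennreal_mult[symmetric] del: ennreal_1 flip: ennreal_1)
      then have "D y * 1 \<le> D y * (ennreal (r powr e) * ennreal (1 / norm y powr e))"
        by (rule mult_left_mono) simp
      then show ?thesis
        using True by (simp add: mult_ac)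
    qed simp
  qed
  also have "\<dots> = r powr e * (\<integral>\<^sup>+y\<in>E. D y * ennreal (1 / norm y powr e) \<partial>lborel)"
    by (intro nn_integral_cmult) measurable
  finally show ?thesis .
qed

lemma dyadic_scale_constant_eq:
  fixes N r \<omega> p s :: real
  assumes "0 < N" "0 < r" "0 < \<omega>"
  shows "(2 * N) powr p * r powr (real n + s * p) * N powr (- (p * (1 - s))) / ((r / 8) ^ n * \<omega>)
    = 2 powr p * 8 ^ n / \<omega> * (N * r) powr (s * p)"
proof -
  have "(2 * N) powr p * N powr (- (p * (1 - s))) = 2 powr p * N powr (s * p)"
    using assms(1) by (simp add: powr_mult mult.assoc flip: powr_add) (simp add: algebra_simps)
  moreover have "r powr (real n + s * p) = r ^ n * r powr (s * p)"
    using assms(2) by (simp add: powr_add powr_realpow)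
  ultimately show ?thesis
    using assms by (simp add: field_simps power_divide powr_mult)
qed

lemma Lp_pow_shift_diff_le_scale:
  fixes u :: "'a::euclidean_space \<Rightarrow> real"
  assumes [measurable]: "u \<in> borel_measurable borel" "S \<in> sets borel"
    and "1 \<le> p" "0 \<le> s" "0 < N" "h = real N *\<^sub>R d" "d \<noteq> 0"
  shows "Lp_pow p S (\<lambda>x. u (x + h) - u x) * real N powr (- (p * (1 - s)))
    \<le> ennreal (2 powr p * 8 ^ DIM('a) / measure lborel (ball (0::'a) 1) * norm h powr (s * p)) *
      (\<integral>\<^sup>+y\<in>ball ((1/2) *\<^sub>R d) (norm d / 8).
         Lp_pow p (nbhd S (norm h)) (\<lambda>x. u (x + y) - u x) * ennreal (1 / norm y powr (real DIM('a) + s * p)) \<partial>lborel)"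
proof -
  define n where "n = DIM('a)"
  define e where "e = real n + s * p"
  define r where "r = norm d"
  define \<omega> where "\<omega> = measure lborel (ball (0::'a) 1)"
  define E where "E = ball ((1/2) *\<^sub>R d) (r / 8)"
  define D where "D y = Lp_pow p (nbhd S (norm h)) (\<lambda>x. u (x + y) - u x)" for y
  define L where "L = Lp_pow p S (\<lambda>x. u (x + h) - u x)"
  have r: "0 < r" using assms(7) by (simp add: r_def)
  have \<omega>: "0 < \<omega>" unfolding \<omega>_def by (rule content_ball_pos) simp
  have norm_h: "norm h = real N * r"
    using assms(6) by (simp add: r_def)
  have [measurable]: "D \<in> borel_measurable borel"
    unfolding D_def by (intro measurable_Lp_pow_shift_diff) (simp_all add: closed_nbhd borel_closed)
  have [measurable]: "E \<in> sets borel"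
    by (simp add: E_def)
  have weight: "(\<integral>\<^sup>+y\<in>E. D y \<partial>lborel) \<le> r powr e * (\<integral>\<^sup>+y\<in>E. D y * ennreal (1 / norm y powr e) \<partial>lborel)"
  proof (rule set_nn_integral_le_powr_weighted)
    show "0 \<le> e"
      using assms(3,4) by (simp add: e_def)
    show "0 < norm y \<and> norm y \<le> r" if "y \<in> E" for y
      using norm_bounds_of_mem_ball_midpoint[of y d] that r by (auto simp: E_def r_def)
  qed measurable
  have "ennreal ((r / 8) ^ n * \<omega>) * L \<le> (2 * real N) powr p * (\<integral>\<^sup>+y\<in>E. D y \<partial>lborel)"
    using Lp_pow_shift_diff_le_ball_average[OF assms(1-3,5,6)] r
    by (simp add: emeasure_lborel_ball E_def D_def L_def n_def \<omega>_def r_def)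
  also have "\<dots> \<le> ennreal ((2 * real N) powr p * r powr e) * (\<integral>\<^sup>+y\<in>E. D y * ennreal (1 / norm y powr e) \<partial>lborel)"
    using mult_left_mono[OF weight] by (simp add: ennreal_mult mult.assoc)
  finally have "L * real N powr (- (p * (1 - s)))
      \<le> ennreal ((2 * real N) powr p * r powr e * real N powr (- (p * (1 - s))) / ((r / 8) ^ n * \<omega>))
        * (\<integral>\<^sup>+y\<in>E. D y * ennreal (1 / norm y powr e) \<partial>lborel)"
    by (rule ennreal_mult_le_imp_le_scaled) (use r \<omega> in simp_all)
  also have "(2 * real N) powr p * r powr e * real N powr (- (p * (1 - s))) / ((r / 8) ^ n * \<omega>)
      = 2 powr p * 8 ^ n / \<omega> * norm h powr (s * p)"
    unfolding e_def norm_h using assms(5) r \<omega> by (intro dyadic_scale_constant_eq) auto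
  finally show ?thesis
    unfolding L_def E_def D_def e_def n_def \<omega>_def r_def .
qed

lemma Lp_pow_shift_diff_le_Gagliardo:
  fixes u :: "'a::euclidean_space \<Rightarrow> real"
  assumes [measurable]: "u \<in> borel_measurable borel" "S \<in> sets borel"
    and "1 \<le> p" "0 \<le> s" "s < 1"
  shows "Lp_pow p S (\<lambda>x. u (x + h) - u x)
    \<le> ennreal (2 powr p * 8 ^ DIM('a) / measure lborel (ball (0::'a) 1) * p * norm h powr (s * p) * (1 - s)) *
      (\<integral>\<^sup>+y\<in>ball 0 (norm h).
         Lp_pow p (nbhd S (norm h)) (\<lambda>x. u (x + y) - u x) * ennreal (1 / norm y powr (real DIM('a) + s * p)) \<partial>lborel)"
proof (cases "h = 0")
  case True
  then show ?thesis
    using assms(3) by (simp add: Lp_pow_def)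
next
  case False
  define K where "K = 2 powr p * 8 ^ DIM('a) / measure lborel (ball (0::'a) 1) * norm h powr (s * p)"
  define q :: real where "q = 2 powr (- (p * (1 - s)))"
  define E where "E k = ball ((1/2) *\<^sub>R (h /\<^sub>R 2 ^ k)) (norm (h /\<^sub>R 2 ^ k) / 8)" for k :: nat
  define G where "G y = Lp_pow p (nbhd S (norm h)) (\<lambda>x. u (x + y) - u x) * ennreal (1 / norm y powr (real DIM('a) + s * p))" for y
  have [measurable]: "G \<in> borel_measurable borel"
    unfolding G_def by (measurable, rule measurable_Lp_pow_shift_diff) (simp_all add: closed_nbhd borel_closed)
  have q: "0 < q" "q < 1"
    unfolding q_def using assms by (auto intro!: powr_less_one)
  have "(2 ^ k) powr (- (p * (1 - s))) = q ^ k" for k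
    unfolding q_def by (simp add: powr_power powr_powr mult.commute flip: powr_realpow)
  then have "Lp_pow p S (\<lambda>x. u (x + h) - u x) * ennreal (q ^ k) \<le> ennreal K * (\<integral>\<^sup>+y\<in>E k. G y \<partial>lborel)" for k
    using Lp_pow_shift_diff_le_scale[OF assms(1-4), where N = "2 ^ k" and h = h and d = "h /\<^sub>R 2 ^ k"] False
    by (simp add: K_def E_def G_def)
  then have "Lp_pow p S (\<lambda>x. u (x + h) - u x) \<le> ennreal (1 - q) * ennreal K * (\<Sum>k. \<integral>\<^sup>+y\<in>E k. G y \<partial>lborel)"
    using q by (intro ennreal_le_of_geometric_bound) auto
  also have "\<dots> \<le> ennreal (1 - q) * ennreal K * (\<integral>\<^sup>+y\<in>ball 0 (norm h). G y \<partial>lborel)"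
    using disjoint_family_dyadic_balls[of h] dyadic_ball_subset[where h = h]
    by (intro mult_left_mono set_nn_integral_disjoint_family_le) (auto simp: E_def)
  also have "\<dots> \<le> ennreal (p * (1 - s)) * ennreal K * (\<integral>\<^sup>+y\<in>ball 0 (norm h). G y \<partial>lborel)"
    using one_minus_two_powr_neg_le[of "p * (1 - s)"] assms
    by (intro mult_right_mono ennreal_leI) (auto simp: q_def)
  finally show ?thesis
    using assms by (simp add: K_def G_def ennreal_mult[symmetric] mult_ac)
qed

theorem mainTheorem16:
  fixes p :: real
  assumes "1 < p"
  shows "\<exists>C::real. 0 < C \<and>
    (\<forall>(v::'a::euclidean_space \<Rightarrow> real) \<Omega> s h.
      v \<in> borel_measurable lebesgue \<longrightarrow>
      integrable lebesgue (\<lambda>x. \<bar>v x\<bar> powr p) \<longrightarrow>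
      open \<Omega> \<longrightarrow> bounded \<Omega> \<longrightarrow> 0 < s \<longrightarrow> s < 1 \<longrightarrow>
      Lp_pow p \<Omega> (\<lambda>x. v (x + h) - v x)
        \<le> ennreal (C * norm h powr (s * p) * (1 - s)) *
          (\<integral>\<^sup>+ y \<in> ball 0 (norm h).
             Lp_pow p (nbhd \<Omega> (norm h)) (\<lambda>x. v (x + y) - v x)
             * ennreal (1 / norm y powr (real DIM('a) + s * p)) \<partial>lebesgue))"
proof (intro exI conjI allI impI)
  define C where "C = 2 powr p * 8 ^ DIM('a) / measure lborel (ball (0::'a) 1) * p"
  have "0 < measure lborel (ball (0::'a) 1)"
    by (rule content_ball_pos) simp
  then show "0 < C"
    using assms by (simp add: C_def)
  fix v :: "'a \<Rightarrow> real" and \<Omega> :: "'a set" and s :: real and h :: 'a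
  assume "v \<in> borel_measurable lebesgue" "open \<Omega>" "0 < s" "s < 1"
  obtain u where u: "u \<in> borel_measurable borel" "AE x in lborel. v x = u x"
    using completion_ex_borel_measurable_real[OF \<open>v \<in> borel_measurable lebesgue\<close>] by auto
  show "Lp_pow p \<Omega> (\<lambda>x. v (x + h) - v x)
      \<le> ennreal (C * norm h powr (s * p) * (1 - s)) *
        (\<integral>\<^sup>+ y \<in> ball 0 (norm h).
           Lp_pow p (nbhd \<Omega> (norm h)) (\<lambda>x. v (x + y) - v x)
           * ennreal (1 / norm y powr (real DIM('a) + s * p)) \<partial>lebesgue)"
    using Lp_pow_shift_diff_le_Gagliardo[OF u(1), of \<Omega> p s h] assms \<open>open \<Omega>\<close> \<open>0 < s\<close> \<open>s < 1\<close>
    by (simp add: C_def Lp_pow_shift_diff_cong_AE[OF u(2)] nn_integral_completion mult_ac)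
qed

end
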